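(* Let $\Sigma$ be a system as in the context and let $O=\mathcal{O}bs_n(A,C)$. Then the relation $\ker([O\ \ -O])\subseteq\mathbb R^n\times\mathbb R^n$ is total, satisfies conditions $(h_0)$–$(h_4)$ below with $R_1=R_2=O$, and has maximal dimension among all total relations $\mathcal R=\ker([R_1\ \ -R_2])\subseteq\mathbb R^n\times\mathbb R^n$ ($R_1,R_2$ real matrices with $n$ columns and the same number of rows) satisfying: $(h_0)$ $\mathrm{diag}(A,A)\mathcal R\subseteq\mathcal R$; $(h_1)$ $R_1B=R_2B$; $(h_2)$ $R_1G\mu=R_2G\mu$; $(h_3)$ $R_1GG^TR_1^T=R_2GG^TR_2^T$; $(h_4)$ $\mathcal R\subseteq\ker([C\ \ -C])$.
   Context: $\Sigma$: $x(t+1)=Ax(t)+Bu(t)+Gw(t)$, $y(t)=Cx(t)+\nu(t)$, $t\in\mathbb N$, $x\in\mathbb R^n$, $u\in\mathbb R^m$, $w\in\mathbb R^l$, $y,\nu\in\mathbb R^p$, where $(w(t))_t$ is i.i.d. $\mathcal N(\mu,I_l)$ and $(\nu(t))_t$ is i.i.d. $\mathcal N(0,\Psi)$. $\mathcal{O}bs_n(A,C)$ is the matrix obtained by stacking $C,CA,\dots,CA^{n-1}$ vertically. A relation $\mathcal R\subseteq\mathbb R^n\times\mathbb R^n$ is total if every $x$ is a first component and every $x'$ a second component of some pair in $\mathcal R$. *)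

theory Defs
  imports "HOL-Analysis.Analysis"
begin

text \<open>Matrix power (note: the ring structure on vec is componentwise, so we
define the matrix power via the matrix product explicitly).\<close>
definition matpow :: "real^'n^'n \<Rightarrow> nat \<Rightarrow> real^'n^'n" where
  "matpow A k = (((**) A) ^^ k) (mat 1)"

definition idx :: "'n::finite \<Rightarrow> nat" where
  "idx = (SOME f. bij_betw f (UNIV::'n set) {..<CARD('n)})"

text \<open>Observability matrix Obs_n(A,C): the blocks C, CA, ..., CA^(n-1) stacked
vertically, n = CARD('n); row (i,j) is row i of C A^(idx j).\<close>
definition Obs :: "real^'n^'n \<Rightarrow> real^'n^'p \<Rightarrow> real^'n^('p \<times> 'n)" where
  "Obs A C = (\<chi> ij. (C ** matpow A (idx (snd ij))) $ fst ij)"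

definition kerrel :: "real^'n^'k \<Rightarrow> real^'n^'k \<Rightarrow> ((real^'n) \<times> (real^'n)) set" where
  "kerrel R1 R2 = {(x, y). R1 *v x - R2 *v y = 0}"

definition total_rel :: "('a \<times> 'a) set \<Rightarrow> bool" where
  "total_rel R \<longleftrightarrow> (\<forall>x. \<exists>y. (x, y) \<in> R) \<and> (\<forall>y. \<exists>x. (x, y) \<in> R)"

definition conds :: "real^'n^'n \<Rightarrow> real^'m^'n \<Rightarrow> real^'l^'n \<Rightarrow> real^'l \<Rightarrow> real^'n^'p
    \<Rightarrow> real^'n^'k \<Rightarrow> real^'n^'k \<Rightarrow> bool" where
  "conds A B G \<mu> C R1 R2 \<longleftrightarrow>
     (\<forall>(x, y) \<in> kerrel R1 R2. (A *v x, A *v y) \<in> kerrel R1 R2) \<and>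
     R1 ** B = R2 ** B \<and>
     R1 *v (G *v \<mu>) = R2 *v (G *v \<mu>) \<and>
     R1 ** G ** transpose G ** transpose R1 = R2 ** G ** transpose G ** transpose R2 \<and>
     kerrel R1 R2 \<subseteq> kerrel C C"

end

theory Submission
  imports Defs
begin

text \<open>The kernel of \<open>[O  -O]\<close> relates \<open>x\<close> and \<open>y\<close> exactly when \<open>x - y\<close> lies in the
  unobservable subspace \<open>U\<^sub>n\<close>, where \<open>U\<^sub>k = {z. C A\<^sup>j z = 0 for j < k}\<close>. The chain \<open>U\<^sub>k\<close> is
  decreasing and \<open>U\<^sub>k\<^sub>+\<^sub>1 = ker C \<inter> A\<^sup>-\<^sup>1 U\<^sub>k\<close>, so once it is stationary it stays so; a dimension
  count shows this happens by step \<open>n\<close>, hence \<open>A U\<^sub>n \<subseteq> U\<^sub>n\<close>, which is \<open>(h\<^sub>0)\<close>. Conditions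
  \<open>(h\<^sub>1)\<close>-\<open>(h\<^sub>3)\<close> are trivial for \<open>R\<^sub>1 = R\<^sub>2\<close>. Conversely, iterating \<open>(h\<^sub>0)\<close> and applying
  \<open>(h\<^sub>4)\<close> shows that related states of any admissible relation have equal outputs
  \<open>C A\<^sup>k x = C A\<^sup>k y\<close>, so the relation lies inside \<open>ker [O  -O]\<close> and has smaller dimension.\<close>

lemma matpow_0 [simp]: "matpow A 0 = mat 1"
  by (simp add: matpow_def)

lemma matpow_Suc: "matpow A (Suc k) = A ** matpow A k"
  by (simp add: matpow_def)

lemma matpow_Suc_right: "matpow A (Suc k) = matpow A k ** A"
proof (induction k)
  case 0
  then show ?case by (simp add: matpow_Suc)
next
  case (Suc k)
  have "matpow A (Suc (Suc k)) = A ** (matpow A k ** A)"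
    using Suc by (simp add: matpow_Suc)
  also have "\<dots> = matpow A (Suc k) ** A"
    by (simp add: matrix_mul_assoc matpow_Suc)
  finally show ?case .
qed

definition unobservable :: "real^'n^'n \<Rightarrow> real^'n^'p \<Rightarrow> nat \<Rightarrow> (real^'n) set" where
  "unobservable A C k = {z. \<forall>j<k. C *v (matpow A j *v z) = 0}"

lemma subspace_unobservable: "subspace (unobservable A C k)"
  unfolding subspace_def unobservable_def
  by (simp add: matrix_vector_right_distrib matrix_vector_mult_scaleR)

lemma unobservable_Suc:
  "unobservable A C (Suc k) = {z. C *v z = 0 \<and> A *v z \<in> unobservable A C k}"
proof -
  have shift: "matpow A (Suc j) *v z = matpow A j *v (A *v z)" for j z
    by (simp add: matpow_Suc_right matrix_vector_mul_assoc)
  have "(\<forall>j<Suc k. C *v (matpow A j *v z) = 0) \<longleftrightarrow>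
        C *v z = 0 \<and> (\<forall>j<k. C *v (matpow A j *v (A *v z)) = 0)" for z
    by (simp only: All_less_Suc2 shift) simp
  then show ?thesis
    unfolding unobservable_def by auto
qed

lemma unobservable_Suc_subset: "unobservable A C (Suc k) \<subseteq> unobservable A C k"
  unfolding unobservable_def by auto

lemma unobservable_stationary:
  assumes "unobservable A C (Suc k) = unobservable A C k" and "k \<le> m"
  shows "unobservable A C (Suc m) = unobservable A C m"
  using assms(2)
proof (induction m rule: dec_induct)
  case base
  show ?case using assms(1) .
next
  case (step m)
  then show ?case by (simp add: unobservable_Suc[of A C "Suc m"] unobservable_Suc[of A C m])
qed

lemma dim_unobservable_strict_chain:
  fixes A :: "real^'n^'n"
  assumes "\<forall>j<k. unobservable A C (Suc j) \<noteq> unobservable A C j"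
  shows "dim (unobservable A C k) + k \<le> CARD('n)"
  using assms
proof (induction k)
  case 0
  then show ?case by (simp add: dim_subset_UNIV_cart)
next
  case (Suc k)
  have span_eq: "span (unobservable A C j) = unobservable A C j" for j
    using subspace_unobservable by (rule span_eq_iff[THEN iffD2])
  have "unobservable A C (Suc k) \<subset> unobservable A C k"
    using Suc.prems unobservable_Suc_subset[of A C k] by auto
  then have "dim (unobservable A C (Suc k)) < dim (unobservable A C k)"
    by (intro dim_psubset) (simp only: span_eq)
  then show ?case using Suc by simp
qed

lemma unobservable_stabilizes:
  fixes A :: "real^'n^'n"
  shows "unobservable A C (Suc CARD('n)) = unobservable A C CARD('n)"
proof -
  obtain k where "k \<le> CARD('n)" "unobservable A C (Suc k) = unobservable A C k"
    using dim_unobservable_strict_chain[of "Suc CARD('n)" A C] by (auto simp: less_Suc_eq_le)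
  then show ?thesis using unobservable_stationary by blast
qed

lemma idx_bij: "bij_betw (idx :: 'n::finite \<Rightarrow> nat) UNIV {..<CARD('n)}"
proof -
  have "\<exists>f. bij_betw f (UNIV::'n set) {..<CARD('n)}"
    using ex_bij_betw_finite_nat[of "UNIV::'n set"] by (auto simp: atLeast0LessThan)
  then show ?thesis unfolding idx_def by (rule someI_ex)
qed

lemma Obs_mult_vec_eq_iff:
  fixes A :: "real^'n^'n"
  shows "Obs A C *v x = Obs A C *v y \<longleftrightarrow>
    (\<forall>k<CARD('n). C *v (matpow A k *v x) = C *v (matpow A k *v y))"
proof -
  have entry: "(Obs A C *v z) $ (i, j) = (C *v (matpow A (idx j) *v z)) $ i" for z i j
  proof -
    have "(Obs A C *v z) $ (i, j) = ((C ** matpow A (idx j)) *v z) $ i"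
      by (simp add: Obs_def matrix_vector_mult_def)
    then show ?thesis by (simp add: matrix_vector_mul_assoc)
  qed
  have "range (idx :: 'n \<Rightarrow> nat) = {..<CARD('n)}"
    using idx_bij bij_betw_imp_surj_on by blast
  then have "(\<forall>k<CARD('n). P k) \<longleftrightarrow> (\<forall>j::'n. P (idx j))" for P
    by (metis lessThan_iff rangeI imageE)
  then show ?thesis
    by (auto simp: vec_eq_iff entry)
qed

lemma kerrel_Obs: "kerrel (Obs A C) (Obs A C) = {(x, y). x - y \<in> unobservable A C CARD('n)}"
  for A :: "real^'n^'n"
  by (auto simp: kerrel_def unobservable_def Obs_mult_vec_eq_iff matrix_vector_mult_diff_distrib)

lemma total_rel_kerrel_same: "total_rel (kerrel R R)"
  unfolding total_rel_def kerrel_def by auto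

lemma kerrel_Obs_invariant:
  "(x, y) \<in> kerrel (Obs A C) (Obs A C) \<Longrightarrow> (A *v x, A *v y) \<in> kerrel (Obs A C) (Obs A C)"
  using unobservable_stabilizes[of A C]
  by (auto simp: kerrel_Obs unobservable_Suc simp flip: matrix_vector_mult_diff_distrib)

lemma kerrel_Obs_subset_kerrel_output: "kerrel (Obs A C) (Obs A C) \<subseteq> kerrel C C"
  for A :: "real^'n^'n"
proof clarify
  fix x y
  assume "(x, y) \<in> kerrel (Obs A C) (Obs A C)"
  moreover have "0 < CARD('n)" by simp
  ultimately have "C *v (matpow A 0 *v (x - y)) = 0"
    unfolding kerrel_Obs unobservable_def by blast
  then show "(x, y) \<in> kerrel C C"
    by (simp add: kerrel_def matrix_vector_mult_diff_distrib)
qed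

lemma conds_Obs: "conds A B G \<mu> C (Obs A C) (Obs A C)"
  unfolding conds_def
  using kerrel_Obs_invariant[of _ _ A C] kerrel_Obs_subset_kerrel_output[of A C] by auto

lemma invariant_kerrel_equal_outputs:
  assumes invariant: "\<forall>(x, y) \<in> kerrel R1 R2. (A *v x, A *v y) \<in> kerrel R1 R2"
    and outputs: "kerrel R1 R2 \<subseteq> kerrel C C"
    and "(x, y) \<in> kerrel R1 R2"
  shows "C *v (matpow A k *v x) = C *v (matpow A k *v y)"
proof -
  have "(matpow A k *v x, matpow A k *v y) \<in> kerrel R1 R2"
  proof (induction k)
    case 0
    then show ?case using \<open>(x, y) \<in> kerrel R1 R2\<close> by simp
  next
    case (Suc k)
    then show ?case
      using invariant by (auto simp: matpow_Suc simp flip: matrix_vector_mul_assoc)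
  qed
  then show ?thesis using outputs unfolding kerrel_def by auto
qed

lemma conds_imp_kerrel_subset_kerrel_Obs:
  fixes A :: "real^'n^'n"
  assumes "conds A B G \<mu> C R1 R2"
  shows "kerrel R1 R2 \<subseteq> kerrel (Obs A C) (Obs A C)"
  using assms invariant_kerrel_equal_outputs[of R1 R2 A C]
  unfolding conds_def by (auto simp: kerrel_def[of "Obs A C"] Obs_mult_vec_eq_iff)

theorem theorem7:
  fixes A :: "real^'n^'n" and B :: "real^'m^'n" and G :: "real^'l^'n"
    and \<mu> :: "real^'l" and C :: "real^'n^'p"
  shows "total_rel (kerrel (Obs A C) (Obs A C))
     \<and> conds A B G \<mu> C (Obs A C) (Obs A C)
     \<and> (\<forall>(R1 :: real^'n^'k) R2. total_rel (kerrel R1 R2) \<and> conds A B G \<mu> C R1 R2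
          \<longrightarrow> dim (kerrel R1 R2) \<le> dim (kerrel (Obs A C) (Obs A C)))"
  using total_rel_kerrel_same conds_Obs conds_imp_kerrel_subset_kerrel_Obs
  by (blast intro: dim_subset)

end
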